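(* Let $q$ be a non-negative integer and $\Lambda$ a unital commutative ring which is $q$-torsion-free. If $\mathfrak g$ is a perfect Lie algebra over $\Lambda$, i.e. $\mathfrak g=[\mathfrak g,\mathfrak g]$, then $Z^{\boxtimes}_q(\mathfrak g)=Z^{\curlywedge}_q(\mathfrak g)=Z(\mathfrak g)$.
   Context: All Lie algebras are over $\Lambda$; $Z(\mathfrak g)$ is the center and $[\mathfrak g,\mathfrak g]$ the $\Lambda$-span of all brackets. Non-abelian $q$-tensor square: for $q\ge1$, $\mathfrak g\otimes^q\mathfrak g$ is the Lie algebra generated by symbols $h\otimes g$ and $\{h\}$ ($h,g\in\mathfrak g$) subject to, for all $h,h',g,g'\in\mathfrak g$, $\lambda,\lambda'\in\Lambda$: (1) $\lambda(h\otimes g)=\lambda h\otimes g=h\otimes\lambda g$; (2) $(h+h')\otimes g=h\otimes g+h'\otimes g$; (3) $h\otimes(g+g')=h\otimes g+h\otimes g'$; (4) $[h,h']\otimes g=h\otimes[h',g]-h'\otimes[h,g]$; (5) $h\otimes[g,g']=[g',h]\otimes g-[g,h]\otimes g'$; (6) $[h\otimes g,h'\otimes g']=[h,g]\otimes[h',g']$; (7) $[\{h'\},h\otimes g]=[qh',h]\otimes g+h\otimes[qh',g]$; (8) $\{\lambda h+\lambda'h'\}=\lambda\{h\}+\lambda'\{h'\}$; (9) $[\{h\},\{h'\}]=qh\otimes qh'$; (10) $\{[h,g]\}=q(h\otimes g)$. For $q=0$, generated by the $h\otimes g$ subject to (1)–(6) only. The $q$-exterior square $\mathfrak g\wedge^q\mathfrak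 g$ is the quotient of $\mathfrak g\otimes^q\mathfrak g$ by the relations $h\otimes h=0$, images written $h\wedge g$. $Z^{\boxtimes}_q(\mathfrak g)=\{g\in\mathfrak g\mid g\otimes x=0\text{ in }\mathfrak g\otimes^q\mathfrak g\text{ for all }x\in\mathfrak g\}$ and $Z^{\curlywedge}_q(\mathfrak g)=\{g\in\mathfrak g\mid g\wedge x=0\text{ in }\mathfrak g\wedge^q\mathfrak g\text{ for all }x\in\mathfrak g\}$. *)

theory Defs
  imports Main
begin

definition lie_alg :: "('r::comm_ring_1 \<Rightarrow> 'g::ab_group_add \<Rightarrow> 'g) \<Rightarrow> ('g \<Rightarrow> 'g \<Rightarrow> 'g) \<Rightarrow> bool" where
  "lie_alg smul br \<longleftrightarrow>
     (\<forall>a b x. smul (a + b) x = smul a x + smul b x) \<and>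
     (\<forall>a x y. smul a (x + y) = smul a x + smul a y) \<and>
     (\<forall>a b x. smul (a * b) x = smul a (smul b x)) \<and>
     (\<forall>x. smul 1 x = x) \<and>
     (\<forall>x y z. br (x + y) z = br x z + br y z) \<and>
     (\<forall>x y z. br x (y + z) = br x y + br x z) \<and>
     (\<forall>a x y. br (smul a x) y = smul a (br x y)) \<and>
     (\<forall>a x y. br x (smul a y) = smul a (br x y)) \<and>
     (\<forall>x. br x x = 0) \<and>
     (\<forall>x y z. br x (br y z) + br y (br z x) + br z (br x y) = 0)"

inductive_set lspan :: "('r \<Rightarrow> 'g::ab_group_add \<Rightarrow> 'g) \<Rightarrow> 'g set \<Rightarrow> 'g set"
  for smul :: "'r \<Rightarrow> 'g \<Rightarrow> 'g" and S :: "'g set" where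
  lspan_zero: "0 \<in> lspan smul S"
| lspan_base: "x \<in> S \<Longrightarrow> x \<in> lspan smul S"
| lspan_add: "x \<in> lspan smul S \<Longrightarrow> y \<in> lspan smul S \<Longrightarrow> x + y \<in> lspan smul S"
| lspan_smul: "x \<in> lspan smul S \<Longrightarrow> smul a x \<in> lspan smul S"

definition derived :: "('r \<Rightarrow> 'g::ab_group_add \<Rightarrow> 'g) \<Rightarrow> ('g \<Rightarrow> 'g \<Rightarrow> 'g) \<Rightarrow> 'g set" where
  "derived smul br = lspan smul {br a b | a b. True}"

definition perfect :: "('r \<Rightarrow> 'g::ab_group_add \<Rightarrow> 'g) \<Rightarrow> ('g \<Rightarrow> 'g \<Rightarrow> 'g) \<Rightarrow> bool" where
  "perfect smul br \<longleftrightarrow> derived smul br = UNIV"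

definition center :: "('g::zero \<Rightarrow> 'g \<Rightarrow> 'g) \<Rightarrow> 'g set" where
  "center br = {z. \<forall>x. br z x = 0}"

definition q_torsion_free :: "nat \<Rightarrow> 'r::comm_ring_1 itself \<Rightarrow> bool" where
  "q_torsion_free q _ \<longleftrightarrow> (q \<noteq> 0 \<longrightarrow> (\<forall>l::'r. of_nat q * l = 0 \<longrightarrow> l = 0))"

text \<open>Terms of the free (Lie) algebra signature over 'r on generators
  h \<otimes> g (LT h g) and {h} (LB h).\<close>
datatype ('r, 'g) lterm =
    LT 'g 'g
  | LB 'g
  | LZ
  | LAdd "('r, 'g) lterm" "('r, 'g) lterm"
  | LNeg "('r, 'g) lterm"
  | LSm 'r "('r, 'g) lterm"
  | LBr "('r, 'g) lterm" "('r, 'g) lterm"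

text \<open>The smallest congruence on terms containing the Lie algebra axioms over 'r and the
defining relations (1)-(10) of the non-abelian q-tensor square (for q = 0: relations
(1)-(6), the brace generators being absent, i.e. set to 0); if ext is True, additionally the
exterior relations h \<otimes> h = 0. Two terms are related iff they are equal in the presented
Lie algebra g \<otimes>^q g (resp. g \<wedge>^q g).\<close>
inductive qrel :: "('r::comm_ring_1 \<Rightarrow> 'g::ab_group_add \<Rightarrow> 'g) \<Rightarrow> ('g \<Rightarrow> 'g \<Rightarrow> 'g) \<Rightarrow> nat \<Rightarrow> bool
    \<Rightarrow> ('r, 'g) lterm \<Rightarrow> ('r, 'g) lterm \<Rightarrow> bool"
  for smul :: "'r \<Rightarrow> 'g \<Rightarrow> 'g" and br :: "'g \<Rightarrow> 'g \<Rightarrow> 'g" and q :: nat and ext :: bool where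
  refl: "qrel smul br q ext t t"
| sym: "qrel smul br q ext s t \<Longrightarrow> qrel smul br q ext t s"
| trans: "qrel smul br q ext s t \<Longrightarrow> qrel smul br q ext t u \<Longrightarrow> qrel smul br q ext s u"
| cong_add: "qrel smul br q ext s s' \<Longrightarrow> qrel smul br q ext t t' \<Longrightarrow> qrel smul br q ext (LAdd s t) (LAdd s' t')"
| cong_neg: "qrel smul br q ext s s' \<Longrightarrow> qrel smul br q ext (LNeg s) (LNeg s')"
| cong_sm: "qrel smul br q ext s s' \<Longrightarrow> qrel smul br q ext (LSm a s) (LSm a s')"
| cong_br: "qrel smul br q ext s s' \<Longrightarrow> qrel smul br q ext t t' \<Longrightarrow> qrel smul br q ext (LBr s t) (LBr s' t')"
| add_assoc: "qrel smul br q ext (LAdd (LAdd s t) u) (LAdd s (LAdd t u))"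
| add_comm: "qrel smul br q ext (LAdd s t) (LAdd t s)"
| add_zero: "qrel smul br q ext (LAdd s LZ) s"
| add_neg: "qrel smul br q ext (LAdd s (LNeg s)) LZ"
| sm_add_l: "qrel smul br q ext (LSm (a + b) s) (LAdd (LSm a s) (LSm b s))"
| sm_add_r: "qrel smul br q ext (LSm a (LAdd s t)) (LAdd (LSm a s) (LSm a t))"
| sm_mult: "qrel smul br q ext (LSm (a * b) s) (LSm a (LSm b s))"
| sm_one: "qrel smul br q ext (LSm 1 s) s"
| br_add_l: "qrel smul br q ext (LBr (LAdd s t) u) (LAdd (LBr s u) (LBr t u))"
| br_add_r: "qrel smul br q ext (LBr s (LAdd t u)) (LAdd (LBr s t) (LBr s u))"
| br_sm_l: "qrel smul br q ext (LBr (LSm a s) t) (LSm a (LBr s t))"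
| br_sm_r: "qrel smul br q ext (LBr s (LSm a t)) (LSm a (LBr s t))"
| br_alt: "qrel smul br q ext (LBr s s) LZ"
| br_jacobi: "qrel smul br q ext (LAdd (LAdd (LBr s (LBr t u)) (LBr t (LBr u s))) (LBr u (LBr s t))) LZ"
| r1a: "qrel smul br q ext (LSm l (LT h g)) (LT (smul l h) g)"
| r1b: "qrel smul br q ext (LSm l (LT h g)) (LT h (smul l g))"
| r2: "qrel smul br q ext (LT (h + h') g) (LAdd (LT h g) (LT h' g))"
| r3: "qrel smul br q ext (LT h (g + g')) (LAdd (LT h g) (LT h g'))"
| r4: "qrel smul br q ext (LT (br h h') g) (LAdd (LT h (br h' g)) (LNeg (LT h' (br h g))))"
| r5: "qrel smul br q ext (LT h (br g g')) (LAdd (LT (br g' h) g) (LNeg (LT (br g h) g')))"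
| r6: "qrel smul br q ext (LBr (LT h g) (LT h' g')) (LT (br h g) (br h' g'))"
| r7: "q \<noteq> 0 \<Longrightarrow> qrel smul br q ext (LBr (LB h') (LT h g))
        (LAdd (LT (br (smul (of_nat q) h') h) g) (LT h (br (smul (of_nat q) h') g)))"
| r8: "q \<noteq> 0 \<Longrightarrow> qrel smul br q ext (LB (smul l h + smul l' h')) (LAdd (LSm l (LB h)) (LSm l' (LB h')))"
| r9: "q \<noteq> 0 \<Longrightarrow> qrel smul br q ext (LBr (LB h) (LB h')) (LT (smul (of_nat q) h) (smul (of_nat q) h'))"
| r10: "q \<noteq> 0 \<Longrightarrow> qrel smul br q ext (LB (br h g)) (LSm (of_nat q) (LT h g))"
| no_braces: "q = 0 \<Longrightarrow> qrel smul br q ext (LB h) LZ"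
| ext_rel: "ext \<Longrightarrow> qrel smul br q ext (LT h h) LZ"

definition Z_tensor :: "('r::comm_ring_1 \<Rightarrow> 'g::ab_group_add \<Rightarrow> 'g) \<Rightarrow> ('g \<Rightarrow> 'g \<Rightarrow> 'g) \<Rightarrow> nat \<Rightarrow> 'g set" where
  "Z_tensor smul br q = {g. \<forall>x. qrel smul br q False (LT g x) LZ}"

definition Z_wedge :: "('r::comm_ring_1 \<Rightarrow> 'g::ab_group_add \<Rightarrow> 'g) \<Rightarrow> ('g \<Rightarrow> 'g \<Rightarrow> 'g) \<Rightarrow> nat \<Rightarrow> 'g set" where
  "Z_wedge smul br q = {g. \<forall>x. qrel smul br q True (LT g x) LZ}"

end

theory Submission
  imports Defs
begin

text \<open>The commutator map \<open>h \<otimes> g \<mapsto> [h, g]\<close>, \<open>{h} \<mapsto> q h\<close> respects every defining relation,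
  so it is well defined on \<open>g \<wedge>\<^sup>q g\<close>; hence \<open>z \<wedge> x = 0\<close> for all \<open>x\<close> forces \<open>z\<close> to be central.
  Conversely, for central \<open>z\<close> relation (5) gives \<open>z \<otimes> [a, b] = [b, z] \<otimes> a - [a, z] \<otimes> b = 0\<close>,
  and in a perfect Lie algebra every element is a linear combination of brackets.\<close>

locale lie_algebra =
  fixes smul :: "'r::comm_ring_1 \<Rightarrow> 'g::ab_group_add \<Rightarrow> 'g"
    and br :: "'g \<Rightarrow> 'g \<Rightarrow> 'g"
  assumes lie_alg: "lie_alg smul br"
begin

lemma
  shows smul_add_left: "smul (a + b) x = smul a x + smul b x"
    and smul_add_right: "smul a (x + y) = smul a x + smul a y"
    and smul_smul: "smul (a * b) x = smul a (smul b x)"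
    and smul_one: "smul 1 x = x"
    and bracket_add_left: "br (x + y) z = br x z + br y z"
    and bracket_add_right: "br x (y + z) = br x y + br x z"
    and bracket_smul_left: "br (smul a x) y = smul a (br x y)"
    and bracket_smul_right: "br x (smul a y) = smul a (br x y)"
    and bracket_self: "br x x = 0"
    and jacobi: "br x (br y z) + br y (br z x) + br z (br x y) = 0"
  using lie_alg unfolding lie_alg_def by auto

lemma smul_zero_left: "smul 0 x = 0"
  using smul_add_left [of 0 0 x] by simp

lemma smul_commute: "smul a (smul b x) = smul b (smul a x)"
  by (metis smul_smul mult.commute)

lemma bracket_zero_right: "br x 0 = 0"
  using bracket_add_right [of x 0 0] by simp

lemma bracket_zero_left: "br 0 x = 0"
  using bracket_add_left [of 0 0 x] by simp

lemma bracket_neg_right: "br x (- y) = - br x y"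
  using bracket_add_right [of x y "- y"] by (simp add: bracket_zero_right add_eq_0_iff)

lemma bracket_neg_left: "br (- x) y = - br x y"
  using bracket_add_left [of x "- x" y] by (simp add: bracket_zero_left add_eq_0_iff)

lemma bracket_antisym: "br y x = - br x y"
proof -
  have "br (x + y) (x + y) = br x x + br x y + (br y x + br y y)"
    by (simp add: bracket_add_left bracket_add_right algebra_simps)
  then show ?thesis
    by (simp add: bracket_self add_eq_0_iff)
qed

lemma bracket_derivation: "br k (br x y) = br (br k x) y + br x (br k y)"
proof -
  have "br x (br y k) = - br x (br k y)"
    by (simp add: bracket_antisym [of k y] bracket_neg_right)
  moreover have "br y (br k x) = - br (br k x) y"
    by (rule bracket_antisym)
  ultimately have "br k (br x y) + - br x (br k y) + - br (br k x) y = 0"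
    using jacobi [of k x y] by simp
  then show ?thesis
    by (simp add: algebra_simps)
qed

end

primrec commutator_map ::
    "('r::comm_ring_1 \<Rightarrow> 'g::ab_group_add \<Rightarrow> 'g) \<Rightarrow> ('g \<Rightarrow> 'g \<Rightarrow> 'g) \<Rightarrow> nat \<Rightarrow> ('r, 'g) lterm \<Rightarrow> 'g"
  where
    "commutator_map smul br q (LT h g) = br h g"
  | "commutator_map smul br q (LB h) = smul (of_nat q) h"
  | "commutator_map smul br q LZ = 0"
  | "commutator_map smul br q (LAdd s t) = commutator_map smul br q s + commutator_map smul br q t"
  | "commutator_map smul br q (LNeg s) = - commutator_map smul br q s"
  | "commutator_map smul br q (LSm a s) = smul a (commutator_map smul br q s)"
  | "commutator_map smul br q (LBr s t) = br (commutator_map smul br q s) (commutator_map smul br q t)"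

lemma (in lie_algebra) commutator_map_respects_qrel:
  "qrel smul br q ext s t \<Longrightarrow> commutator_map smul br q s = commutator_map smul br q t"
proof (induction rule: qrel.induct)
  case (r4 h h' g)
  have "br (br h h') g = br h (br h' g) - br h' (br h g)"
    using bracket_derivation [of h h' g] by simp
  then show ?case by simp
next
  case (r5 h g g')
  have "br g (br h g') = br (br g' h) g"
    by (simp add: bracket_antisym [of "br h g'" g] bracket_antisym [of g' h] bracket_neg_left)
  moreover have "br (br h g) g' = - br (br g h) g'"
    by (simp add: bracket_antisym [of g h] bracket_neg_left)
  ultimately show ?case
    using bracket_derivation [of h g g'] by simp
next
  case (r7 h' h g)
  show ?case
    using bracket_derivation [of "smul (of_nat q) h'" h g] by simp
next
  case (r8 l h l' h')
  show ?case by (simp add: smul_add_right smul_commute [of "of_nat q"])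
qed (simp_all add: smul_add_left smul_add_right smul_smul smul_one bracket_add_left
       bracket_add_right bracket_smul_left bracket_smul_right bracket_self jacobi smul_zero_left)

lemma qrel_tensor_imp_qrel: "qrel smul br q False s t \<Longrightarrow> qrel smul br q ext s t"
  by (induction rule: qrel.induct) (auto intro: qrel.intros)

lemma qrel_zero_if_double:
  assumes "qrel smul br q ext t (LAdd t t)"
  shows "qrel smul br q ext t LZ"
proof -
  let ?R = "qrel smul br q ext"
  have "?R LZ (LAdd t (LNeg t))"
    by (rule qrel.sym, rule qrel.add_neg)
  moreover have "?R (LAdd t (LNeg t)) (LAdd (LAdd t t) (LNeg t))"
    by (rule qrel.cong_add [OF assms qrel.refl])
  moreover have "?R (LAdd (LAdd t t) (LNeg t)) (LAdd t (LAdd t (LNeg t)))"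
    by (rule qrel.add_assoc)
  moreover have "?R (LAdd t (LAdd t (LNeg t))) (LAdd t LZ)"
    by (rule qrel.cong_add [OF qrel.refl qrel.add_neg])
  moreover have "?R (LAdd t LZ) t"
    by (rule qrel.add_zero)
  ultimately have "?R LZ t"
    by (meson qrel.trans)
  then show ?thesis
    by (rule qrel.sym)
qed

lemma qrel_LT_zero_left: "qrel smul br q ext (LT 0 x) LZ"
  by (rule qrel_zero_if_double) (metis add_0 qrel.r2)

lemma qrel_LT_zero_right: "qrel smul br q ext (LT x 0) LZ"
  by (rule qrel_zero_if_double) (metis add_0 qrel.r3)

lemma qrel_LSm_LZ: "qrel smul br q ext (LSm a LZ) LZ"
proof (rule qrel_zero_if_double)
  have "qrel smul br q ext (LSm a LZ) (LSm a (LAdd LZ LZ))"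
    by (rule qrel.cong_sm, rule qrel.sym, rule qrel.add_zero)
  then show "qrel smul br q ext (LSm a LZ) (LAdd (LSm a LZ) (LSm a LZ))"
    using qrel.sm_add_r qrel.trans by metis
qed

lemma (in lie_algebra) qrel_LT_center_derived:
  assumes z: "z \<in> center br" and x: "x \<in> derived smul br"
  shows "qrel smul br q ext (LT z x) LZ"
  using x unfolding derived_def
proof (induction rule: lspan.induct)
  case lspan_zero
  show ?case by (rule qrel_LT_zero_right)
next
  case (lspan_base y)
  then obtain a b where y: "y = br a b" by blast
  have "br a z = 0" "br b z = 0"
    using z by (simp_all add: center_def bracket_antisym [of _ z])
  then have "qrel smul br q ext (LT z y) (LAdd (LT 0 a) (LNeg (LT 0 b)))"
    using y qrel.r5 by metis
  moreover have "qrel smul br q ext (LAdd (LT 0 a) (LNeg (LT 0 b))) (LAdd LZ (LNeg LZ))"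
    by (intro qrel.cong_add qrel.cong_neg qrel_LT_zero_left)
  ultimately show ?case
    using qrel.add_neg qrel.trans by metis
next
  case (lspan_add x y)
  have "qrel smul br q ext (LT z (x + y)) (LAdd (LT z x) (LT z y))"
    by (rule qrel.r3)
  moreover have "qrel smul br q ext (LAdd (LT z x) (LT z y)) (LAdd LZ LZ)"
    by (intro qrel.cong_add lspan_add.IH)
  ultimately show ?case
    using qrel.add_zero qrel.trans by metis
next
  case (lspan_smul x a)
  have "qrel smul br q ext (LT z (smul a x)) (LSm a (LT z x))"
    by (rule qrel.sym, rule qrel.r1b)
  moreover have "qrel smul br q ext (LSm a (LT z x)) (LSm a LZ)"
    by (intro qrel.cong_sm lspan_smul.IH)
  ultimately show ?case
    using qrel_LSm_LZ qrel.trans by metis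
qed

lemma Z_tensor_subset_Z_wedge: "Z_tensor smul br q \<subseteq> Z_wedge smul br q"
  unfolding Z_tensor_def Z_wedge_def using qrel_tensor_imp_qrel by blast

lemma (in lie_algebra) Z_wedge_subset_center: "Z_wedge smul br q \<subseteq> center br"
  unfolding Z_wedge_def center_def using commutator_map_respects_qrel by fastforce

lemma (in lie_algebra) center_subset_Z_tensor:
  assumes "perfect smul br"
  shows "center br \<subseteq> Z_tensor smul br q"
  using assms qrel_LT_center_derived unfolding perfect_def Z_tensor_def by blast

theorem proposition6p9:
  fixes smul :: "'r::comm_ring_1 \<Rightarrow> 'g::ab_group_add \<Rightarrow> 'g"
    and br :: "'g \<Rightarrow> 'g \<Rightarrow> 'g"
    and q :: nat
  assumes "lie_alg smul br"
    and "q_torsion_free q TYPE('r)"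
    and "perfect smul br"
  shows "Z_tensor smul br q = Z_wedge smul br q \<and> Z_wedge smul br q = center br"
proof -
  interpret lie_algebra smul br
    by unfold_locales (fact assms(1))
  show ?thesis
    using Z_tensor_subset_Z_wedge Z_wedge_subset_center center_subset_Z_tensor [OF assms(3)]
    by blast
qed

end
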